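(* Let $d\ge 1$, $\eta>0$, $\sigma>0$ and $K>1$, and let $\mathcal{D}^*$ be the Gaussian mixture distribution on $\mathbb{R}^d\times\{-1,+1\}$ defined by $\Pr(y=+1)=\Pr(y=-1)=\tfrac12$, $\mu=(\eta,\dots,\eta)\in\mathbb{R}^d$, and $$\mathbf{x}\mid (y=+1)\sim\mathcal{N}(\mu,\sigma_+^2 I_d),\qquad \mathbf{x}\mid (y=-1)\sim\mathcal{N}(-\mu,\sigma_-^2 I_d),$$ where $\sigma_-=\sigma$ and $\sigma_+=K\sigma$. Consider linear classifiers $f(\mathbf{x})=\operatorname{sign}(\langle \omega,\mathbf{x}\rangle+b)$ with $\omega\in\mathbb{R}^d$, $b\in\mathbb{R}$, where $\operatorname{sign}(z)=1$ if $z\ge 0$ and $-1$ otherwise. Let $f_{nat}$ be a linear classifier minimizing the natural risk $\mathbf{R}_{nat}(f)=\Pr_{(\mathbf{x},y)\sim\mathcal{D}^*}(f(\mathbf{x})\neq y)$ over this class. Then the probability of correctly classifying class $-1$ is strictly larger than that of correctly classifying class $+1$: $$\Pr\big(f_{nat}(\mathbf{x})=-1\mid y=-1\big)\;>\;\Pr\big(f_{nat}(\mathbf{x})=+1\mid y=+1\big).$$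
   Context: The class $+1$ (with larger variance) is regarded as intrinsically more vulnerable. Class-wise natural risks are $\mathbf{R}^-_{nat}(f)=\Pr(f(\mathbf{x})=+1\mid y=-1)$ and $\mathbf{R}^+_{nat}(f)=\Pr(f(\mathbf{x})=-1\mid y=+1)$, and the class-wise correct-classification probabilities are $\mathbf{P}^-_{nat}(f)=1-\mathbf{R}^-_{nat}(f)$ and $\mathbf{P}^+_{nat}(f)=1-\mathbf{R}^+_{nat}(f)$. The claim is that $\mathbf{P}^-_{nat}(f_{nat})>\mathbf{P}^+_{nat}(f_{nat})$, i.e. a model's estimated probability of the true class is lower for the more vulnerable class. *)

theory Defs
  imports "HOL-Probability.Probability"
begin

text \<open>Isotropic Gaussian N(m, s^2 I_d) on R^d (d = CARD('d)), given by its density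
  w.r.t. Lebesgue measure: the product of one-dimensional normal densities.\<close>
definition gauss_iso :: "real^'d \<Rightarrow> real \<Rightarrow> (real^'d) measure" where
  "gauss_iso m s = density lborel (\<lambda>x. ennreal (\<Prod>i\<in>UNIV. normal_density (m$i) s (x$i)))"

definition lin_clf :: "real^'d \<Rightarrow> real \<Rightarrow> real^'d \<Rightarrow> int" where
  "lin_clf w b x = (if w \<bullet> x + b \<ge> 0 then 1 else -1)"

definition D_plus :: "real \<Rightarrow> real \<Rightarrow> real \<Rightarrow> (real^'d) measure" where
  "D_plus \<eta> \<sigma> K = gauss_iso (\<chi> i. \<eta>) (K * \<sigma>)"

definition D_minus :: "real \<Rightarrow> real \<Rightarrow> real \<Rightarrow> (real^'d) measure" where
  "D_minus \<eta> \<sigma> K = gauss_iso (\<chi> i. - \<eta>) \<sigma>"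

definition nat_risk :: "real \<Rightarrow> real \<Rightarrow> real \<Rightarrow> real^'d \<Rightarrow> real \<Rightarrow> real" where
  "nat_risk \<eta> \<sigma> K w b =
     1/2 * measure (D_minus \<eta> \<sigma> K) {x. lin_clf w b x = 1}
   + 1/2 * measure (D_plus \<eta> \<sigma> K) {x. lin_clf w b x = -1}"

end

theory Submission
  imports Defs
begin

text \<open>A linear classifier with nonzero weight w classifies class -1 correctly with probability
  \<Phi>(u) and class +1 with probability \<Phi>(v), where u and v are the distances of the two class
  means from the hyperplane measured in units of the respective projected standard deviations
  \<sigma>\<parallel>w\<parallel> and K\<sigma>\<parallel>w\<parallel>. At an optimal classifier the derivative of the risk in the bias
  vanishes, which gives K \<phi>(u) = \<phi>(v); since K > 1 this forces |v| < |u|. The optimal risk is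
  below 1/2, i.e. u + v > 0, hence v < u and \<Phi>(v) < \<Phi>(u).\<close>

lemma prod_Basis_vec:
  fixes h :: "real^'d \<Rightarrow> 'b::comm_monoid_mult"
  shows "(\<Prod>b\<in>Basis. h b) = (\<Prod>i\<in>UNIV. h (axis i 1))"
proof -
  have Basis_eq: "(Basis :: (real^'d) set) = range (\<lambda>i. axis i 1)"
    by (auto simp: Basis_vec_def)
  show ?thesis
    unfolding Basis_eq by (subst prod.reindex) (auto simp: inj_on_def axis_eq_axis)
qed

lemma borel_measurable_vec_nth[measurable]: "(\<lambda>x::real^'d. x $ i) \<in> borel_measurable borel"
  by (intro borel_measurable_continuous_onI continuous_intros)

lemma space_gauss_iso[simp]: "space (gauss_iso m s) = UNIV"
  by (simp add: gauss_iso_def)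

lemma sets_gauss_iso[simp, measurable_cong]: "sets (gauss_iso m s) = sets borel"
  by (simp add: gauss_iso_def)

lemma emeasure_gauss_iso_box:
  fixes m :: "real^'d" and A :: "'d \<Rightarrow> real set"
  assumes s: "s > 0" and A[measurable]: "\<And>i. A i \<in> sets borel"
  shows "emeasure (gauss_iso m s) {x. \<forall>i. x$i \<in> A i}
     = (\<Prod>i\<in>UNIV. \<integral>\<^sup>+t. ennreal (normal_density (m$i) s t) * indicator (A i) t \<partial>lborel)"
proof -
  \<comment> \<open>\<open>nn_integral_lborel_prod\<close> factorises over \<open>Basis\<close>, so the factors are indexed by basis vectors.\<close>
  define ib where "ib = inv (\<lambda>i::'d. axis i (1::real))"
  have ib: "ib (axis i 1) = i" for i
    unfolding ib_def by (rule inv_f_f) (simp add: inj_def axis_eq_axis)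
  define F where "F b t = ennreal (normal_density (m$(ib b)) s t) * indicator (A (ib b)) t" for b t
  have S: "{x. \<forall>i. x$i \<in> A i} \<in> sets (lborel :: (real^'d) measure)"
    by measurable
  have "emeasure (gauss_iso m s) {x. \<forall>i. x$i \<in> A i}
      = (\<integral>\<^sup>+x. ennreal (\<Prod>i\<in>UNIV. normal_density (m$i) s (x$i)) * indicator {x. \<forall>i. x$i \<in> A i} x \<partial>lborel)"
    unfolding gauss_iso_def by (rule emeasure_density[OF _ S]) simp
  also have "\<dots> = (\<integral>\<^sup>+x. (\<Prod>b\<in>Basis. F b (x \<bullet> b)) \<partial>lborel)"
  proof (rule nn_integral_cong)
    fix x :: "real^'d"
    have "(\<Prod>b\<in>Basis. F b (x \<bullet> b)) = (\<Prod>i\<in>UNIV. F (axis i 1) (x \<bullet> axis i 1))"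
      by (rule prod_Basis_vec)
    also have "\<dots> = (\<Prod>i\<in>UNIV. ennreal (normal_density (m$i) s (x$i)) * indicator (A i) (x$i))"
      by (simp add: F_def ib inner_axis)
    also have "\<dots> = ennreal (\<Prod>i\<in>UNIV. normal_density (m$i) s (x$i)) * indicator {x. \<forall>i. x$i \<in> A i} x"
      by (simp add: prod.distrib prod_ennreal indicator_def prod.If_cases)
    finally show "ennreal (\<Prod>i\<in>UNIV. normal_density (m$i) s (x$i)) * indicator {x. \<forall>i. x$i \<in> A i} x = (\<Prod>b\<in>Basis. F b (x \<bullet> b))" by simp
  qed
  also have "\<dots> = (\<Prod>b\<in>Basis. \<integral>\<^sup>+t. F b t \<partial>lborel)"
    by (rule nn_integral_lborel_prod) (auto simp: F_def)
  also have "\<dots> = (\<Prod>i\<in>UNIV. \<integral>\<^sup>+t. F (axis i 1) t \<partial>lborel)"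
    by (rule prod_Basis_vec)
  finally show ?thesis by (simp add: F_def ib)
qed

lemma nn_integral_normal_density: "s > 0 \<Longrightarrow> (\<integral>\<^sup>+t. ennreal (normal_density \<mu> s t) \<partial>lborel) = 1"
  by (subst nn_integral_eq_integral) auto

lemma prob_space_gauss_iso:
  assumes s: "s > 0"
  shows "prob_space (gauss_iso (m::real^'d) s)"
proof
  show "emeasure (gauss_iso m s) (space (gauss_iso m s)) = 1"
    using emeasure_gauss_iso_box[OF s, of "\<lambda>_. UNIV" m] by (simp add: nn_integral_normal_density[OF s])
qed

lemma distributed_gauss_iso_component:
  assumes s: "s > 0"
  shows "distributed (gauss_iso (m::real^'d) s) lborel (\<lambda>x. x$i) (normal_density (m$i) s)"
  unfolding distributed_def
proof (intro conjI)
  show "distr (gauss_iso m s) lborel (\<lambda>x. x$i) = density lborel (normal_density (m$i) s)"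
  proof (rule measure_eqI)
    fix A assume "A \<in> sets (distr (gauss_iso m s) lborel (\<lambda>x. x$i))"
    then have A: "A \<in> sets borel" by simp
    have "(\<lambda>x. x$i) -` A = {x. \<forall>j. x$j \<in> (if j = i then A else UNIV)}"
      by auto
    then have "emeasure (distr (gauss_iso m s) lborel (\<lambda>x. x$i)) A
        = (\<Prod>j\<in>UNIV. \<integral>\<^sup>+t. ennreal (normal_density (m$j) s t) * indicator (if j = i then A else UNIV) t \<partial>lborel)"
      using A by (simp add: emeasure_distr emeasure_gauss_iso_box[OF s])
    also have "\<dots> = (\<integral>\<^sup>+t. ennreal (normal_density (m$i) s t) * indicator A t \<partial>lborel)"
      by (subst prod.remove[of _ i]) (auto simp: nn_integral_normal_density[OF s] intro!: prod.neutral)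
    finally show "emeasure (distr (gauss_iso m s) lborel (\<lambda>x. x$i)) A = emeasure (density lborel (normal_density (m$i) s)) A"
      using A by (simp add: emeasure_density)
  qed simp
qed simp_all

lemma indep_vars_gauss_iso_components:
  assumes s: "s > 0"
  shows "prob_space.indep_vars (gauss_iso (m::real^'d) s) (\<lambda>_. borel) (\<lambda>i x. x$i) UNIV"
proof -
  let ?M = "gauss_iso m s"
  interpret prob_space ?M by (rule prob_space_gauss_iso[OF s])
  have rv: "random_variable borel (\<lambda>x. x$i)" for i
    by simp
  have sf: "sigma_finite_measure (distr ?M borel (\<lambda>x. x$i))" for i
    using prob_space_distr[OF rv] by (simp add: prob_space_imp_sigma_finite)
  interpret ps: product_sigma_finite "\<lambda>i. distr ?M borel (\<lambda>x. x$i)"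
    by (simp add: product_sigma_finite_def sf)
  show ?thesis
  proof (subst indep_vars_iff_distr_eq_PiM[OF _ rv])
    show "(UNIV::'d set) \<noteq> {}" by simp
    show "distr ?M (\<Pi>\<^sub>M i\<in>UNIV. borel) (\<lambda>x. \<lambda>i\<in>UNIV. x$i) = (\<Pi>\<^sub>M i\<in>UNIV. distr ?M borel (\<lambda>x. x$i))"
    proof (rule ps.PiM_eqI)
      show "finite (UNIV::'d set)" by simp
      show "sets (distr ?M (\<Pi>\<^sub>M i\<in>UNIV. borel) (\<lambda>x. \<lambda>i\<in>UNIV. x$i)) = sets (\<Pi>\<^sub>M i\<in>UNIV. distr ?M borel (\<lambda>x. x$i))"
        by (simp cong: sets_PiM_cong)
      fix A assume A: "\<And>i. i \<in> UNIV \<Longrightarrow> A i \<in> sets (distr ?M borel (\<lambda>x. x$i))"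
      then have A': "\<And>i. A i \<in> sets borel" by simp
      have "emeasure (distr ?M borel (\<lambda>x. x$i)) (A i)
          = (\<integral>\<^sup>+t. ennreal (normal_density (m$i) s t) * indicator (A i) t \<partial>lborel)" for i
        using distributed_emeasure[OF distributed_gauss_iso_component[OF s], of "A i"] A'
        by (simp add: emeasure_distr)
      moreover have "(\<lambda>x. \<lambda>i\<in>UNIV. x$i) -` Pi\<^sub>E UNIV A \<inter> space ?M = {x. \<forall>i. x$i \<in> A i}"
        by auto
      ultimately show "emeasure (distr ?M (\<Pi>\<^sub>M i\<in>UNIV. borel) (\<lambda>x. \<lambda>i\<in>UNIV. x$i)) (Pi\<^sub>E UNIV A)
          = (\<Prod>i\<in>UNIV. emeasure (distr ?M borel (\<lambda>x. x$i)) (A i))"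
        using A' by (simp add: emeasure_distr emeasure_gauss_iso_box[OF s A'])
    qed
  qed
qed

lemma distributed_gauss_iso_inner:
  assumes s: "s > 0" and w: "w \<noteq> 0"
  shows "distributed (gauss_iso (m::real^'d) s) lborel (\<lambda>x. w \<bullet> x) (normal_density (w \<bullet> m) (s * norm w))"
proof -
  let ?M = "gauss_iso m s"
  interpret prob_space ?M by (rule prob_space_gauss_iso[OF s])
  \<comment> \<open>Only coordinates with \<open>w$i \<noteq> 0\<close> are summed: \<open>sum_indep_normal\<close> needs positive deviations.\<close>
  define I where "I = {i. w$i \<noteq> 0}"
  have I: "finite I" "I \<noteq> {}" using w by (auto simp: I_def vec_eq_iff)
  have ind: "indep_vars (\<lambda>_. borel) (\<lambda>i x. w$i * x$i) I"
    using indep_vars_compose2[OF indep_vars_subset[OF indep_vars_gauss_iso_components[OF s, of m], of I], of "\<lambda>i t. w$i * t" "\<lambda>_. borel"]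
    by simp
  have nd: "distributed ?M lborel (\<lambda>x. w$i * x$i) (normal_density (w$i * m$i) (\<bar>w$i\<bar> * s))" if "i \<in> I" for i
    using normal_density_affine[OF distributed_gauss_iso_component[OF s, of m i] s, of "w$i" 0] that by (simp add: I_def)
  have "distributed ?M lborel (\<lambda>x. \<Sum>i\<in>I. w$i * x$i) (normal_density (\<Sum>i\<in>I. w$i * m$i) (sqrt (\<Sum>i\<in>I. (\<bar>w$i\<bar> * s)\<^sup>2)))"
    by (rule sum_indep_normal[OF I ind _ nd]) (use s in \<open>auto simp: I_def\<close>)
  moreover have "(\<lambda>x. \<Sum>i\<in>I. w$i * x$i) = (\<lambda>x. w \<bullet> x)"
    by (auto simp: inner_vec_def I_def intro!: sum.mono_neutral_left)
  moreover have "(\<Sum>i\<in>I. w$i * m$i) = w \<bullet> m"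
    by (auto simp: inner_vec_def I_def intro!: sum.mono_neutral_left)
  moreover have "sqrt (\<Sum>i\<in>I. (\<bar>w$i\<bar> * s)\<^sup>2) = s * norm w"
  proof -
    have "(\<Sum>i\<in>I. (\<bar>w$i\<bar> * s)\<^sup>2) = s\<^sup>2 * (\<Sum>i\<in>UNIV. (w$i)\<^sup>2)"
      by (auto simp: I_def power_mult_distrib sum_distrib_left mult.commute intro!: sum.mono_neutral_left)
    then show ?thesis using s by (simp add: norm_vec_def L2_set_def real_sqrt_mult)
  qed
  ultimately show ?thesis by simp
qed

definition std_normal :: "real measure" where
  "std_normal = density lborel std_normal_density"

definition Phi :: "real \<Rightarrow> real" where
  "Phi = cdf std_normal"

lemma real_distribution_std_normal: "real_distribution std_normal"
proof -
  interpret prob_space std_normal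
    unfolding std_normal_def by (rule prob_space_normal_density) simp
  show ?thesis by unfold_locales (simp add: std_normal_def)
qed

interpretation std_normal: real_distribution std_normal
  by (rule real_distribution_std_normal)

lemma continuous_on_std_normal_density: "continuous_on S std_normal_density"
  unfolding normal_density_def by (intro continuous_intros) simp

lemma Phi_diff_eq_integral:
  assumes "a \<le> c"
  shows "Phi c - Phi a = integral {a..c} std_normal_density"
proof (cases "a = c")
  case False
  with assms have "a < c" by simp
  have "(std_normal_density has_integral integral {a..c} std_normal_density) {a<..c}"
  proof (subst has_integral_spike_set_eq)
    show "(std_normal_density has_integral integral {a..c} std_normal_density) {a..c}"
      by (intro integrable_integral integrable_continuous_interval continuous_on_std_normal_density)
  qed (auto intro: negligible_subset[of "{a}"])
  then have "emeasure std_normal {a<..c} = ennreal (integral {a..c} std_normal_density)"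
    unfolding std_normal_def
    by (subst emeasure_density) (auto simp: nn_integral_has_integral_lebesgue')
  moreover have "0 \<le> integral {a..c} std_normal_density"
    by (rule integral_nonneg) (auto intro: integrable_continuous_interval continuous_on_std_normal_density)
  ultimately show ?thesis
    using std_normal.cdf_diff_eq[OF \<open>a < c\<close>]
    by (simp add: Phi_def std_normal.emeasure_eq_measure)
qed simp

lemma Phi_has_real_derivative: "(Phi has_real_derivative std_normal_density c) (at c)"
proof (rule has_field_derivative_transform_within_open)
  let ?a = "c - 1" and ?b = "c + 1"
  have "((\<lambda>x. Phi ?a + integral {?a..x} std_normal_density) has_real_derivative std_normal_density c)
      (at c within {?a..?b})"
    using integral_has_real_derivative[OF continuous_on_std_normal_density, of c ?a ?b]
    by (intro derivative_eq_intros) auto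
  then show "((\<lambda>x. Phi ?a + integral {?a..x} std_normal_density) has_real_derivative std_normal_density c) (at c)"
    by (subst (asm) at_within_interior) auto
  show "Phi ?a + integral {?a..x} std_normal_density = Phi x" if "x \<in> {?a<..<?b}" for x
    using Phi_diff_eq_integral[of ?a x] that by simp
qed auto

lemma Phi_has_real_derivative_comp[derivative_intros]:
  "(f has_real_derivative f') (at x within S) \<Longrightarrow>
    ((\<lambda>x. Phi (f x)) has_real_derivative std_normal_density (f x) * f') (at x within S)"
  using DERIV_chain'[OF _ Phi_has_real_derivative] by (simp add: mult.commute)

lemma strict_mono_Phi: "strict_mono Phi"
proof (rule strict_monoI)
  fix a b :: real assume "a < b"
  then show "Phi a < Phi b"
    by (rule DERIV_pos_imp_increasing) (metis Phi_has_real_derivative normal_density_pos zero_less_one)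
qed

lemma measure_std_normal_lessThan: "measure std_normal {..<c} = Phi c"
proof -
  have "measure std_normal {c} = 0"
    using DERIV_isCont[OF Phi_has_real_derivative] by (simp add: Phi_def std_normal.isCont_cdf)
  moreover have "{..c} = {..<c} \<union> {c}" by auto
  ultimately show ?thesis
    using std_normal.finite_measure_Union[of "{..<c}" "{c}"] by (simp add: Phi_def cdf_def)
qed

lemma Phi_minus: "Phi (- c) = 1 - Phi c"
proof -
  have "DERIV (\<lambda>c. Phi (- c) + Phi c) x :> 0" for x
    by (auto intro!: derivative_eq_intros simp: std_normal_density_def)
  then have const: "Phi (- c) + Phi c = Phi (- x) + Phi x" for x
    by (intro DERIV_isconst_all allI)
  have "((\<lambda>x. Phi (- x) + Phi x) \<longlongrightarrow> 0 + 1) at_top"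
    unfolding Phi_def
    by (intro tendsto_add filterlim_compose[OF std_normal.cdf_lim_at_bot filterlim_uminus_at_bot_at_top]
        std_normal.cdf_lim_at_top_prob)
  moreover have "(\<lambda>x. Phi (- x) + Phi x) = (\<lambda>_. Phi (- c) + Phi c)"
    by (intro ext) (rule const[symmetric])
  ultimately have "Phi (- c) + Phi c = 1"
    by (simp add: tendsto_const_iff)
  then show ?thesis by simp
qed

lemma Phi_add_gt_1_iff: "1 < Phi u + Phi v \<longleftrightarrow> 0 < u + v"
proof -
  have "1 < Phi u + Phi v \<longleftrightarrow> Phi (- v) < Phi u" by (auto simp: Phi_minus)
  also have "\<dots> \<longleftrightarrow> - v < u" by (rule strict_mono_less[OF strict_mono_Phi])
  finally show ?thesis by linarith
qed

lemma std_normal_density_mult_eq_imp_square_less: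
  assumes "K * std_normal_density u = std_normal_density v" and "K > 1"
  shows "v\<^sup>2 < u\<^sup>2"
proof -
  have "std_normal_density u < std_normal_density v"
    using mult_strict_right_mono[OF assms(2) normal_density_pos[of 1 0 u]] assms(1) by simp
  then show ?thesis by (simp add: std_normal_density_def divide_less_cancel)
qed

lemma measure_gauss_iso_halfspace:
  assumes s: "s > 0" and w: "w \<noteq> 0"
  shows "measure (gauss_iso (m::real^'d) s) {x. w \<bullet> x + b < 0} = Phi ((- b - w \<bullet> m) / (s * norm w))"
proof -
  let ?M = "gauss_iso m s" and ?z = "\<lambda>x. (w \<bullet> x - w \<bullet> m) / (s * norm w)"
  interpret prob_space ?M by (rule prob_space_gauss_iso[OF s])
  have sn: "s * norm w > 0" using s w by simp
  have "distributed ?M lborel ?z std_normal_density"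
    using distributed_gauss_iso_inner[OF s w, of m] normal_standard_normal_convert[OF sn] by simp
  then have distr_z: "distr ?M lborel ?z = std_normal" and meas: "?z \<in> measurable ?M lborel"
    by (auto simp: distributed_def std_normal_def)
  have "Phi ((- b - w \<bullet> m) / (s * norm w)) = measure (distr ?M lborel ?z) {..<(- b - w \<bullet> m) / (s * norm w)}"
    by (simp add: distr_z measure_std_normal_lessThan)
  also have "\<dots> = measure ?M (?z -` {..<(- b - w \<bullet> m) / (s * norm w)} \<inter> space ?M)"
    by (rule measure_distr[OF meas]) auto
  also have "?z -` {..<(- b - w \<bullet> m) / (s * norm w)} \<inter> space ?M = {x. w \<bullet> x + b < 0}"
    using sn by (auto simp: divide_less_cancel)
  finally show ?thesis by simp
qed

lemma lin_clf_eq_minus_1_iff: "lin_clf w b x = -1 \<longleftrightarrow> w \<bullet> x + b < 0"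
  by (simp add: lin_clf_def)

lemma lin_clf_eq_1_iff: "lin_clf w b x = 1 \<longleftrightarrow> \<not> w \<bullet> x + b < 0"
  by (simp add: lin_clf_def)

lemma measure_gauss_iso_lin_clf_pos:
  assumes "s > 0"
  shows "measure (gauss_iso (m::real^'d) s) {x. lin_clf w b x = 1}
       = 1 - measure (gauss_iso m s) {x. lin_clf w b x = -1}"
proof -
  interpret prob_space "gauss_iso m s" by (rule prob_space_gauss_iso[OF assms])
  have "{x. lin_clf w b x = 1} = space (gauss_iso m s) - {x. w \<bullet> x + b < 0}"
    by (auto simp: lin_clf_eq_1_iff)
  then show ?thesis
    using prob_compl[of "{x. w \<bullet> x + b < 0}"] by (simp add: lin_clf_eq_minus_1_iff)
qed

lemma nat_risk_eq:
  assumes "\<sigma> > 0" and "K > 0"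
  shows "nat_risk \<eta> \<sigma> K w b = 1 - (measure (D_minus \<eta> \<sigma> K) {x. lin_clf w b x = -1}
                                   + measure (D_plus \<eta> \<sigma> K) {x. lin_clf w b x = 1}) / 2"
proof -
  have "measure (D_minus \<eta> \<sigma> K) {x. lin_clf w b x = 1} = 1 - measure (D_minus \<eta> \<sigma> K) {x. lin_clf w b x = -1}"
    unfolding D_minus_def by (rule measure_gauss_iso_lin_clf_pos[OF assms(1)])
  moreover have "measure (D_plus \<eta> \<sigma> K) {x. lin_clf w b x = 1} = 1 - measure (D_plus \<eta> \<sigma> K) {x. lin_clf w b x = -1}"
    unfolding D_plus_def using assms by (intro measure_gauss_iso_lin_clf_pos) simp
  ultimately show ?thesis
    unfolding nat_risk_def by (simp add: field_simps)
qed

lemma measure_D_minus_correct: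
  assumes "\<sigma> > 0" and "w \<noteq> 0"
  shows "measure (D_minus \<eta> \<sigma> K) {x. lin_clf w b x = -1}
       = Phi ((w \<bullet> (\<chi> i. \<eta>) - b) / (\<sigma> * norm w))"
proof -
  have "w \<bullet> (\<chi> i. - \<eta>) = - (w \<bullet> (\<chi> i. \<eta>))"
    by (simp add: inner_vec_def sum_negf)
  then show ?thesis
    using measure_gauss_iso_halfspace[OF assms, of "\<chi> i. - \<eta>" b]
    by (simp add: D_minus_def lin_clf_eq_minus_1_iff)
qed

lemma measure_D_plus_correct:
  assumes "\<sigma> > 0" and "K > 0" and "w \<noteq> 0"
  shows "measure (D_plus \<eta> \<sigma> K) {x. lin_clf w b x = 1}
       = Phi ((b + w \<bullet> (\<chi> i. \<eta>)) / (K * \<sigma> * norm w))"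
proof -
  have "K * \<sigma> > 0" using assms by simp
  then show ?thesis
    using measure_gauss_iso_halfspace[of "K * \<sigma>" w "\<chi> i. \<eta>" b] assms
      measure_gauss_iso_lin_clf_pos[of "K * \<sigma>" "\<chi> i. \<eta>" w b]
    by (simp add: D_plus_def lin_clf_eq_minus_1_iff Phi_minus[symmetric] minus_divide_left add.commute)
qed

lemma nat_risk_eq_Phi:
  assumes "\<sigma> > 0" and "K > 0" and "w \<noteq> 0"
  shows "nat_risk \<eta> \<sigma> K w b = 1 - (Phi ((w \<bullet> (\<chi> i. \<eta>) - b) / (\<sigma> * norm w))
                                   + Phi ((b + w \<bullet> (\<chi> i. \<eta>)) / (K * \<sigma> * norm w))) / 2"
  using assms by (simp add: nat_risk_eq measure_D_minus_correct measure_D_plus_correct)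

lemma nat_risk_less_half_iff:
  assumes "\<sigma> > 0" and "K > 0" and "w \<noteq> 0"
  shows "nat_risk \<eta> \<sigma> K w b < 1/2 \<longleftrightarrow>
    0 < (w \<bullet> (\<chi> i. \<eta>) - b) / (\<sigma> * norm w) + (b + w \<bullet> (\<chi> i. \<eta>)) / (K * \<sigma> * norm w)"
  unfolding nat_risk_eq_Phi[OF assms] Phi_add_gt_1_iff[symmetric] by argo

lemma nat_risk_zero_weight:
  assumes "\<sigma> > 0" and "K > 0"
  shows "nat_risk \<eta> \<sigma> K (0::real^'d) b = 1/2"
proof -
  interpret minus: prob_space "D_minus \<eta> \<sigma> K :: (real^'d) measure"
    unfolding D_minus_def using assms(1) by (rule prob_space_gauss_iso)
  interpret plus: prob_space "D_plus \<eta> \<sigma> K :: (real^'d) measure"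
    unfolding D_plus_def using assms by (intro prob_space_gauss_iso) simp
  have "space (D_minus \<eta> \<sigma> K :: (real^'d) measure) = UNIV"
    and "space (D_plus \<eta> \<sigma> K :: (real^'d) measure) = UNIV"
    by (simp_all add: D_minus_def D_plus_def)
  then show ?thesis
    using minus.prob_space plus.prob_space
    by (cases "b < 0") (simp_all add: nat_risk_eq[OF assms] lin_clf_def)
qed

lemma nat_risk_all_ones_less_half:
  assumes "\<eta> > 0" and "\<sigma> > 0" and "K > 0"
  shows "nat_risk \<eta> \<sigma> K (\<chi> i::'d::finite. 1) 0 < 1/2"
proof -
  have "(\<chi> i::'d. (1::real)) \<noteq> 0" by (simp add: vec_eq_iff)
  moreover have "(\<chi> i::'d. 1) \<bullet> (\<chi> i. \<eta>) > 0"
    using assms(1) by (simp add: inner_vec_def)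
  ultimately show ?thesis
    using assms by (subst nat_risk_less_half_iff) (auto intro!: add_pos_pos divide_pos_pos)
qed

lemma nat_risk_has_real_derivative_bias:
  fixes \<eta> \<sigma> K b :: real and w :: "real^'d"
  assumes "\<sigma> > 0" and "K > 0" and "w \<noteq> 0"
  defines "u \<equiv> (w \<bullet> (\<chi> i. \<eta>) - b) / (\<sigma> * norm w)"
    and "v \<equiv> (b + w \<bullet> (\<chi> i. \<eta>)) / (K * \<sigma> * norm w)"
  shows "((\<lambda>b. nat_risk \<eta> \<sigma> K w b) has_real_derivative
          (K * std_normal_density u - std_normal_density v) / (2 * K * \<sigma> * norm w)) (at b)"
  unfolding nat_risk_eq_Phi[OF assms(1-3)] u_def v_def
  using assms(1-3) by (auto intro!: derivative_eq_intros simp: field_simps)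

theorem mainTheorem1:
  fixes \<eta> \<sigma> K b :: real and w :: "real^'d"
  assumes "\<eta> > 0" and "\<sigma> > 0" and "K > 1"
    and "\<forall>(w'::real^'d) b'. nat_risk \<eta> \<sigma> K w b \<le> nat_risk \<eta> \<sigma> K w' b'"
  shows "measure (D_minus \<eta> \<sigma> K) {x. lin_clf w b x = -1}
           > measure (D_plus \<eta> \<sigma> K) {x. lin_clf w b x = 1}"
proof -
  note \<sigma> = assms(2) and K = assms(3) and opt = assms(4)
  have "K > 0" using K by simp
  have less_half: "nat_risk \<eta> \<sigma> K w b < 1/2"
    using opt nat_risk_all_ones_less_half[OF assms(1) \<sigma> \<open>K > 0\<close>] by (meson le_less_trans)
  then have w: "w \<noteq> 0"
    using nat_risk_zero_weight[OF \<sigma> \<open>K > 0\<close>, of \<eta> b] by (metis less_irrefl)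
  define u where "u = (w \<bullet> (\<chi> i. \<eta>) - b) / (\<sigma> * norm w)"
  define v where "v = (b + w \<bullet> (\<chi> i. \<eta>)) / (K * \<sigma> * norm w)"
  have "0 < u + v"
    using less_half nat_risk_less_half_iff[OF \<sigma> \<open>K > 0\<close> w] by (simp add: u_def v_def)
  have "(K * std_normal_density u - std_normal_density v) / (2 * K * \<sigma> * norm w) = 0"
    using nat_risk_has_real_derivative_bias[OF \<sigma> \<open>K > 0\<close> w, of \<eta> b, folded u_def v_def]
    by (rule DERIV_local_min[OF _ zero_less_one]) (use opt in blast)
  then have "K * std_normal_density u = std_normal_density v"
    using \<sigma> K w by simp
  then have "v\<^sup>2 < u\<^sup>2"
    using K by (rule std_normal_density_mult_eq_imp_square_less)
  then have "0 < (u - v) * (u + v)"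
    by (simp add: algebra_simps power2_eq_square)
  with \<open>0 < u + v\<close> have "v < u"
    by (simp add: zero_less_mult_iff)
  then show ?thesis
    using strict_mono_less[OF strict_mono_Phi] \<sigma> \<open>K > 0\<close> w
    by (simp add: measure_D_minus_correct measure_D_plus_correct u_def v_def)
qed

end
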